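(* Let $(M,\mathcal{T})$ be an edge-transitive closed pseudo 3-manifold and let $d=d_e$ be the common valence of its edges. (1) If $d\ne 6$, then there exists no zero-curvature generalized decorated metric on $(M,\mathcal T)$, and any solution $l(t)$ of the extended Ricci flow satisfies $|l(t_n)|\to\infty$ along some sequence $t_n\to\infty$. (2) If $d=6$, then there exists a zero-curvature decorated metric, and any solution $l(t)$ of the extended Ricci flow converges exponentially fast to a zero-curvature decorated metric.
   Context: Closed pseudo 3-manifold $(M,\mathcal T)$: quotient of a disjoint union $\mathscr T$ of finitely many tetrahedra by affine isomorphisms pairing faces, every 2-face being paired with another; $E$ is the set of edge classes. The valence $d_e$ of $e\in E$ is the number of edges of $\mathscr T$ in the class $e$. $(M,\mathcal T)$ is edge-transitive if for any $e,\hat e\in E$ there is an automorphism of $\mathcal T$ mapping $e$ to $\hat e$. For a tetrahedron $\sigma$ with vertices $v_1,\dots,v_4$ and $l\in\mathbb R^E$, $l_\sigma=(l_{ij})\in\mathbb R^6$ with $l_{ij}=l(\text{class of } v_iv_j)$. Extended dihedral angles: for $(x_1,x_2,x_3)\in\mathbb R^3_{>0}$, $a_i$ is the Euclidean angle opposite $x_i$ if strict triangle inequalities hold, and $a_i=\pi$, $a_j=a_k=0$ if $x_i\ge x_j+x_k$. For $l\in\mathbb R^6$, $\{i,j,k,h\}=\{1,2,3,4\}$, $\alpha_{ij}(l)$ is the generalized angle opposite the side $e^{(l_{ij}+l_{kh})/2}$ in the generalized triangle with sides $e^{(l_{ij}+l_{kh})/2},e^{(l_{ik}+l_{jh})/2},e^{(l_{ih}+l_{jk})/2}$.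 $\mathscr L\subset\mathbb R^6$ is where these satisfy strict triangle inequalities (decorated ideal hyperbolic tetrahedra). A generalized decorated metric is any $l\in\mathbb R^E$; a decorated metric is one with $l_\sigma\in\mathscr L$ for all $\sigma$. Generalized Ricci curvature: $\widetilde K_e(l)=2\pi-\sum\alpha_{ij}(l_\sigma)$ over pairs (tetrahedron $\sigma$, edge $v_iv_j$ of $\sigma$ in class $e$). Zero-curvature means $\widetilde K(l)=0$. Extended Ricci flow: $\frac{d}{dt}l(t)=\widetilde K(l(t))$, $t\ge 0$, $l(t)\in\mathbb R^E$. *)

theory Defs
  imports Complex_Main
begin

text \<open>Tetrahedra are indexed by elements of a finite set Tet; every tetrahedron has
vertices 0,1,2,3. A face of the disjoint union is a pair (sigma, i): the face of
sigma opposite to vertex i. The face pairing is given by glue (an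
involution without fixed points on faces) and the affine isomorphism of the face f
onto the face glue f is given by the vertex bijection gmap f.\<close>

definition V4 :: "nat set" where "V4 = {0..<4}"

definition tet_edges :: "nat set set" where
  "tet_edges = {A. A \<subseteq> V4 \<and> card A = 2}"

definition faces :: "'a set \<Rightarrow> ('a \<times> nat) set" where
  "faces Tet = Tet \<times> V4"

definition edges :: "'a set \<Rightarrow> ('a \<times> nat set) set" where
  "edges Tet = Tet \<times> tet_edges"

definition pseudo3 :: "'a set \<Rightarrow> ('a \<times> nat \<Rightarrow> 'a \<times> nat) \<Rightarrow> ('a \<times> nat \<Rightarrow> nat \<Rightarrow> nat) \<Rightarrow> bool" where
  "pseudo3 Tet glue gmap \<longleftrightarrow> finite Tet \<and> Tet \<noteq> {} \<and>
     (\<forall>f\<in>faces Tet. glue f \<in> faces Tet \<and> glue f \<noteq> f \<and> glue (glue f) = f \<and>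
        bij_betw (gmap f) (V4 - {snd f}) (V4 - {snd (glue f)}) \<and>
        (\<forall>v\<in>V4 - {snd f}. gmap (glue f) (gmap f v) = v))"

definition edge_step :: "'a set \<Rightarrow> ('a \<times> nat \<Rightarrow> 'a \<times> nat) \<Rightarrow> ('a \<times> nat \<Rightarrow> nat \<Rightarrow> nat)
    \<Rightarrow> (('a \<times> nat set) \<times> ('a \<times> nat set)) set" where
  "edge_step Tet glue gmap = {((\<sigma>, A), (\<tau>, B)). (\<sigma>, A) \<in> edges Tet \<and> (\<tau>, B) \<in> edges Tet \<and>
      (\<exists>i\<in>V4. i \<notin> A \<and> fst (glue (\<sigma>, i)) = \<tau> \<and> B = gmap (\<sigma>, i) ` A)}"

definition edge_rel :: "'a set \<Rightarrow> ('a \<times> nat \<Rightarrow> 'a \<times> nat) \<Rightarrow> ('a \<times> nat \<Rightarrow> nat \<Rightarrow> nat)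
    \<Rightarrow> (('a \<times> nat set) \<times> ('a \<times> nat set)) set" where
  "edge_rel Tet glue gmap = (edge_step Tet glue gmap \<union> (edge_step Tet glue gmap)\<inverse>)\<^sup>*"

definition edge_class :: "'a set \<Rightarrow> ('a \<times> nat \<Rightarrow> 'a \<times> nat) \<Rightarrow> ('a \<times> nat \<Rightarrow> nat \<Rightarrow> nat)
    \<Rightarrow> 'a \<times> nat set \<Rightarrow> ('a \<times> nat set) set" where
  "edge_class Tet glue gmap x = {y. (x, y) \<in> edge_rel Tet glue gmap}"

definition edge_classes :: "'a set \<Rightarrow> ('a \<times> nat \<Rightarrow> 'a \<times> nat) \<Rightarrow> ('a \<times> nat \<Rightarrow> nat \<Rightarrow> nat)
    \<Rightarrow> ('a \<times> nat set) set set" where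
  "edge_classes Tet glue gmap = edge_class Tet glue gmap ` edges Tet"

definition valence :: "('a \<times> nat set) set \<Rightarrow> nat" where
  "valence e = card e"

definition automorphism :: "'a set \<Rightarrow> ('a \<times> nat \<Rightarrow> 'a \<times> nat) \<Rightarrow> ('a \<times> nat \<Rightarrow> nat \<Rightarrow> nat)
    \<Rightarrow> ('a \<Rightarrow> 'a) \<Rightarrow> ('a \<Rightarrow> nat \<Rightarrow> nat) \<Rightarrow> bool" where
  "automorphism Tet glue gmap \<pi> \<rho> \<longleftrightarrow> bij_betw \<pi> Tet Tet \<and>
     (\<forall>\<sigma>\<in>Tet. bij_betw (\<rho> \<sigma>) V4 V4) \<and>
     (\<forall>\<sigma>\<in>Tet. \<forall>i\<in>V4.
        glue (\<pi> \<sigma>, \<rho> \<sigma> i) = (\<pi> (fst (glue (\<sigma>, i))), \<rho> (fst (glue (\<sigma>, i))) (snd (glue (\<sigma>, i)))) \<and>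
        (\<forall>v\<in>V4 - {i}. gmap (\<pi> \<sigma>, \<rho> \<sigma> i) (\<rho> \<sigma> v) = \<rho> (fst (glue (\<sigma>, i))) (gmap (\<sigma>, i) v)))"

definition edge_map :: "('a \<Rightarrow> 'a) \<Rightarrow> ('a \<Rightarrow> nat \<Rightarrow> nat) \<Rightarrow> 'a \<times> nat set \<Rightarrow> 'a \<times> nat set" where
  "edge_map \<pi> \<rho> x = (\<pi> (fst x), \<rho> (fst x) ` snd x)"

definition edge_transitive :: "'a set \<Rightarrow> ('a \<times> nat \<Rightarrow> 'a \<times> nat) \<Rightarrow> ('a \<times> nat \<Rightarrow> nat \<Rightarrow> nat) \<Rightarrow> bool" where
  "edge_transitive Tet glue gmap \<longleftrightarrow>
     (\<forall>e\<in>edge_classes Tet glue gmap. \<forall>e'\<in>edge_classes Tet glue gmap.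
        \<exists>\<pi> \<rho>. automorphism Tet glue gmap \<pi> \<rho> \<and> edge_map \<pi> \<rho> ` e = e')"

definition tri_strict :: "real \<Rightarrow> real \<Rightarrow> real \<Rightarrow> bool" where
  "tri_strict x y z \<longleftrightarrow> x < y + z \<and> y < x + z \<and> z < x + y"

definition gen_angle :: "real \<Rightarrow> real \<Rightarrow> real \<Rightarrow> real" where
  "gen_angle x y z =
     (if tri_strict x y z then arccos ((y\<^sup>2 + z\<^sup>2 - x\<^sup>2) / (2 * y * z))
      else if x \<ge> y + z then pi else 0)"

definition mval :: "(nat set \<Rightarrow> real) \<Rightarrow> nat set \<Rightarrow> real" where
  "mval l A = exp ((l A + l (V4 - A)) / 2)"

text \<open>alpha_ij(l): the generalized angle opposite e^((l_ij+l_kh)/2) in the generalized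
triangle with sides e^((l_ij+l_kh)/2), e^((l_ik+l_jh)/2), e^((l_ih+l_jk)/2).\<close>
definition alpha_t :: "(nat set \<Rightarrow> real) \<Rightarrow> nat set \<Rightarrow> real" where
  "alpha_t l A =
     (let i = Min A; k = Min (V4 - A); h = Max (V4 - A)
      in gen_angle (mval l A) (mval l {i, k}) (mval l {i, h}))"

definition in_L :: "(nat set \<Rightarrow> real) \<Rightarrow> bool" where
  "in_L l \<longleftrightarrow> tri_strict (mval l {0, 1}) (mval l {0, 2}) (mval l {0, 3})"

text \<open>A generalized decorated metric is a function l on edge classes (only its values on E
matter). l_sigma assigns to the edge A of sigma the value of l on the class of (sigma, A).\<close>
definition lsig :: "'a set \<Rightarrow> ('a \<times> nat \<Rightarrow> 'a \<times> nat) \<Rightarrow> ('a \<times> nat \<Rightarrow> nat \<Rightarrow> nat)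
    \<Rightarrow> (('a \<times> nat set) set \<Rightarrow> real) \<Rightarrow> 'a \<Rightarrow> nat set \<Rightarrow> real" where
  "lsig Tet glue gmap l \<sigma> A = l (edge_class Tet glue gmap (\<sigma>, A))"

definition decorated :: "'a set \<Rightarrow> ('a \<times> nat \<Rightarrow> 'a \<times> nat) \<Rightarrow> ('a \<times> nat \<Rightarrow> nat \<Rightarrow> nat)
    \<Rightarrow> (('a \<times> nat set) set \<Rightarrow> real) \<Rightarrow> bool" where
  "decorated Tet glue gmap l \<longleftrightarrow> (\<forall>\<sigma>\<in>Tet. in_L (lsig Tet glue gmap l \<sigma>))"

definition curv :: "'a set \<Rightarrow> ('a \<times> nat \<Rightarrow> 'a \<times> nat) \<Rightarrow> ('a \<times> nat \<Rightarrow> nat \<Rightarrow> nat)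
    \<Rightarrow> (('a \<times> nat set) set \<Rightarrow> real) \<Rightarrow> ('a \<times> nat set) set \<Rightarrow> real" where
  "curv Tet glue gmap l e =
     2 * pi - (\<Sum>x\<in>e. alpha_t (lsig Tet glue gmap l (fst x)) (snd x))"

definition zero_curv :: "'a set \<Rightarrow> ('a \<times> nat \<Rightarrow> 'a \<times> nat) \<Rightarrow> ('a \<times> nat \<Rightarrow> nat \<Rightarrow> nat)
    \<Rightarrow> (('a \<times> nat set) set \<Rightarrow> real) \<Rightarrow> bool" where
  "zero_curv Tet glue gmap l \<longleftrightarrow> (\<forall>e\<in>edge_classes Tet glue gmap. curv Tet glue gmap l e = 0)"

definition enorm :: "('a \<times> nat set) set set \<Rightarrow> (('a \<times> nat set) set \<Rightarrow> real) \<Rightarrow> real" where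
  "enorm E l = sqrt (\<Sum>e\<in>E. (l e)\<^sup>2)"

definition ricci_flow_sol :: "'a set \<Rightarrow> ('a \<times> nat \<Rightarrow> 'a \<times> nat) \<Rightarrow> ('a \<times> nat \<Rightarrow> nat \<Rightarrow> nat)
    \<Rightarrow> (real \<Rightarrow> ('a \<times> nat set) set \<Rightarrow> real) \<Rightarrow> bool" where
  "ricci_flow_sol Tet glue gmap l \<longleftrightarrow>
     (\<forall>e\<in>edge_classes Tet glue gmap. \<forall>t\<ge>0.
        ((\<lambda>s. l s e) has_real_derivative curv Tet glue gmap (l t) e) (at t within {0..}))"

end

(*
  The six generalized angles of a decorated tetrahedron are the three angles of one generalized
  triangle, each occurring at a pair of opposite edges, so every tetrahedron contributes exactly
  2 pi to the total angle. Hence the total curvature is 2 pi (|E| - |T|) for every generalized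
  metric, while counting edge incidences gives d |E| = 6 |T|. If d is not 6, the total curvature
  is a nonzero constant: no metric has zero curvature, and along the flow the sum of the
  coordinates of l(t) is affine in t with nonzero slope.

  If d = 6, every metric all of whose triangles are equilateral has zero curvature. These metrics
  form a subspace W, and K(l) is orthogonal to W for every l, so the flow keeps the component of
  l(t) along W fixed. With w0 the projection of l(0) onto W, |l(t) - w0|^2 decreases at rate 2/3
  times the sum over all triangles of (a_i - a_j)(s_i - s_j), where a are the angles and s the
  doubled logarithms of the sides. Larger sides face larger angles, quantitatively so while
  |l - w0| stays bounded, hence this rate dominates the squared deviation of the triangles from
  equilateral, which in turn dominates |l - w0|^2 on the orthogonal complement of W. Gronwall's
  inequality then gives exponential convergence.
*)
theory Submission
  imports Defs
begin

section \<open>Generalized triangles\<close>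

lemma gen_angle_swap: "gen_angle x y z = gen_angle x z y"
  unfolding gen_angle_def tri_strict_def by (simp add: add.commute mult.commute mult.left_commute)

lemma tri_strict_perm:
  "tri_strict x y z \<Longrightarrow> tri_strict y x z" "tri_strict x y z \<Longrightarrow> tri_strict z x y"
  unfolding tri_strict_def by auto

lemma law_of_cosines_ratio_bounds:
  fixes x y z :: real
  assumes "0 < y" "0 < z" "tri_strict x y z"
  shows "-1 < (y\<^sup>2 + z\<^sup>2 - x\<^sup>2) / (2*y*z)" "(y\<^sup>2 + z\<^sup>2 - x\<^sup>2) / (2*y*z) < 1"
proof -
  have "0 < (x - y + z) * (x + y - z)" "0 < (y + z - x) * (y + z + x)"
    using assms unfolding tri_strict_def by (intro mult_pos_pos; linarith)+
  then have "y\<^sup>2 + z\<^sup>2 - x\<^sup>2 < 2*y*z" "-(2*y*z) < y\<^sup>2 + z\<^sup>2 - x\<^sup>2"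
    by (simp_all add: algebra_simps power2_eq_square)
  then show "-1 < (y\<^sup>2 + z\<^sup>2 - x\<^sup>2) / (2*y*z)" "(y\<^sup>2 + z\<^sup>2 - x\<^sup>2) / (2*y*z) < 1"
    using assms by (simp_all add: divide_less_eq less_divide_eq)
qed

lemma law_of_cosines_ratio_sum_pos:
  fixes x y z :: real
  assumes "0 < x" "0 < y" "0 < z" "tri_strict x y z"
  shows "0 < (y\<^sup>2 + z\<^sup>2 - x\<^sup>2) / (2*y*z) + (x\<^sup>2 + z\<^sup>2 - y\<^sup>2) / (2*x*z)"
proof -
  have "0 < (x + y) * ((z - (x - y)) * (z + (x - y))) / (2*x*y*z)"
    using assms unfolding tri_strict_def by (intro divide_pos_pos mult_pos_pos) auto
  also have "\<dots> = (y\<^sup>2 + z\<^sup>2 - x\<^sup>2) / (2*y*z) + (x\<^sup>2 + z\<^sup>2 - y\<^sup>2) / (2*x*z)"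
    using assms by (simp add: field_simps power2_eq_square; simp add: algebra_simps)
  finally show ?thesis .
qed

lemma arccos_law_of_cosines_sum:
  fixes x y z :: real
  assumes "0 < x" "0 < y" "0 < z" "tri_strict x y z"
  shows "arccos ((y\<^sup>2 + z\<^sup>2 - x\<^sup>2) / (2*y*z)) + arccos ((x\<^sup>2 + z\<^sup>2 - y\<^sup>2) / (2*x*z))
         + arccos ((x\<^sup>2 + y\<^sup>2 - z\<^sup>2) / (2*x*y)) = pi"
proof -
  define u where "u = (y\<^sup>2 + z\<^sup>2 - x\<^sup>2) / (2*y*z)"
  define v where "v = (x\<^sup>2 + z\<^sup>2 - y\<^sup>2) / (2*x*z)"
  define w where "w = (x\<^sup>2 + y\<^sup>2 - z\<^sup>2) / (2*x*y)"
  \<comment> \<open>By Heron's formula H is 16 times the squared area, so sin A sin B = H / (4 x y z^2).\<close>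
  define H where "H = (x+y+z) * (-x+y+z) * (x-y+z) * (x+y-z)"
  have "0 < H"
    using assms unfolding H_def tri_strict_def by (intro mult_pos_pos) auto
  have u: "-1 < u" "u < 1"
    using law_of_cosines_ratio_bounds[OF assms(2-4)] by (simp_all add: u_def)
  have v: "-1 < v" "v < 1"
    using law_of_cosines_ratio_bounds[OF assms(1,3) tri_strict_perm(1)[OF assms(4)]] by (simp_all add: v_def)
  have w: "-1 < w" "w < 1"
    using law_of_cosines_ratio_bounds[OF assms(1,2) tri_strict_perm(2)[OF assms(4)]] by (simp_all add: w_def)
  have "(1 - u\<^sup>2) * (1 - v\<^sup>2) = (H / (4*x*y*z\<^sup>2))\<^sup>2" "u * v + w = H / (4*x*y*z\<^sup>2)"
    unfolding u_def v_def w_def H_def using assms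
    by (simp_all add: field_simps power2_eq_square; simp add: algebra_simps)+
  moreover have "sin (arccos u) * sin (arccos v) = sqrt ((1 - u\<^sup>2) * (1 - v\<^sup>2))"
    using u v by (simp add: sin_arccos real_sqrt_mult)
  ultimately have cos_uv: "cos (arccos u + arccos v) = - w"
    using \<open>0 < H\<close> assms u v by (simp add: cos_add)
  have "-v \<le> u"
    using law_of_cosines_ratio_sum_pos[OF assms] unfolding u_def v_def by simp
  then have "arccos u + arccos v \<le> pi"
    using arccos_le_arccos[of "-v" u] u v by (simp add: arccos_minus)
  then have "arccos u + arccos v = pi - arccos w"
    using cos_uv u v w arccos_cos[of "arccos u + arccos v"]
    by (simp add: arccos_minus arccos_lbound)
  then show ?thesis
    unfolding u_def v_def w_def by simp
qed

lemma gen_angle_sum: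
  fixes x y z :: real
  assumes "0 < x" "0 < y" "0 < z"
  shows "gen_angle x y z + gen_angle y x z + gen_angle z x y = pi"
proof (cases "tri_strict x y z")
  case True
  then show ?thesis
    using arccos_law_of_cosines_sum[OF assms True] tri_strict_perm[OF True]
    by (simp add: gen_angle_def)
next
  case False
  then consider "y + z \<le> x" | "x + z \<le> y" | "x + y \<le> z"
    unfolding tri_strict_def by linarith
  then show ?thesis
    using assms by cases (simp_all add: gen_angle_def tri_strict_def)
qed

lemma gen_angle_equilateral: "0 < x \<Longrightarrow> gen_angle x x x = pi / 3"
  by (simp add: gen_angle_def tri_strict_def power2_eq_square)

lemma gen_angle_le_opposite:
  fixes x y z :: real
  assumes "0 < x" "0 < y" "0 < z" "y \<le> z"
  shows "gen_angle y x z \<le> gen_angle z x y"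
proof (cases "tri_strict x y z")
  case True
  then have T: "tri_strict y x z" "tri_strict z x y"
    unfolding tri_strict_def by auto
  have "0 \<le> (z - y) * ((z + y - x) * (z + y + x)) / (2*x*y*z)"
    using True assms unfolding tri_strict_def by (intro divide_nonneg_pos mult_nonneg_nonneg) auto
  also have "\<dots> = (x\<^sup>2 + z\<^sup>2 - y\<^sup>2) / (2*x*z) - (x\<^sup>2 + y\<^sup>2 - z\<^sup>2) / (2*x*y)"
    using assms by (simp add: field_simps power2_eq_square; simp add: algebra_simps)
  finally show ?thesis
    using law_of_cosines_ratio_bounds[OF assms(1,3) T(1)] law_of_cosines_ratio_bounds[OF assms(1,2) T(2)]
    unfolding gen_angle_def if_P[OF T(1)] if_P[OF T(2)] by (intro arccos_le_arccos) auto
next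
  case False
  then consider "y + z \<le> x" | "x + z \<le> y" | "x + y \<le> z"
    unfolding tri_strict_def by linarith
  then show ?thesis
    using assms by cases (simp_all add: gen_angle_def tri_strict_def)
qed

lemma cos_diff_le_abs_diff:
  fixes a b :: real
  shows "cos b - cos a \<le> \<bar>a - b\<bar>"
proof -
  have "cos b - cos a = 2 * sin ((b + a) / 2) * sin ((a - b) / 2)"
    by (rule cos_diff_cos)
  also have "\<dots> \<le> \<bar>2 * sin ((b + a) / 2) * sin ((a - b) / 2)\<bar>"
    by (rule abs_ge_self)
  also have "\<dots> = 2 * \<bar>sin ((b + a) / 2)\<bar> * \<bar>sin ((a - b) / 2)\<bar>"
    by (simp add: abs_mult)
  also have "\<dots> \<le> 2 * 1 * \<bar>(a - b) / 2\<bar>"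
    by (intro mult_mono abs_sin_x_le_abs_x) auto
  finally show ?thesis
    by simp
qed

lemma arccos_diff_ge:
  assumes "-1 \<le> u" "u \<le> v" "v \<le> 1"
  shows "v - u \<le> arccos u - arccos v"
proof -
  have "v - u = cos (arccos v) - cos (arccos u)"
    using assms by simp
  also have "\<dots> \<le> arccos u - arccos v"
    using cos_diff_le_abs_diff[where a = "arccos u" and b = "arccos v"] arccos_le_arccos[OF assms] by simp
  finally show ?thesis .
qed

lemma gen_angle_gap_ge:
  fixes x y z :: real
  assumes "0 < y" "0 < z" "y \<le> x" "z \<le> x"
  shows "(x - y) / x \<le> gen_angle x y z - gen_angle y x z"
proof (cases "tri_strict x y z")
  case True
  have "0 < x"
    using assms by simp
  have T: "tri_strict y x z"
    using True by (rule tri_strict_perm)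
  have "0 \<le> (x - y) / x"
    using assms by simp
  have "(x - y) / x \<le> (x - y) / z"
    using assms by (intro divide_left_mono) auto
  also have "\<dots> = (x - y) * (2*x*y) / (2*x*y*z)"
    using assms by simp
  also have "\<dots> \<le> (x - y) * ((x + y)\<^sup>2 - z\<^sup>2) / (2*x*y*z)"
  proof -
    have "z\<^sup>2 \<le> x\<^sup>2"
      using assms by (intro power_mono) auto
    then have "2*x*y \<le> (x + y)\<^sup>2 - z\<^sup>2"
      using zero_le_power2[of y] unfolding power2_sum by linarith
    then show ?thesis
      using assms \<open>0 < x\<close> by (intro divide_right_mono mult_left_mono) auto
  qed
  also have "\<dots> = (x\<^sup>2 + z\<^sup>2 - y\<^sup>2) / (2*x*z) - (y\<^sup>2 + z\<^sup>2 - x\<^sup>2) / (2*y*z)"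
    using assms \<open>0 < x\<close> by (simp add: field_simps power2_eq_square; simp add: algebra_simps)
  also have "\<dots> \<le> gen_angle x y z - gen_angle y x z"
    using law_of_cosines_ratio_bounds[OF assms(1,2) True]
      law_of_cosines_ratio_bounds[OF \<open>0 < x\<close> assms(2) T] calculation \<open>0 \<le> (x - y) / x\<close>
    unfolding gen_angle_def if_P[OF True] if_P[OF T] by (intro arccos_diff_ge) auto
  finally show ?thesis .
next
  case False
  then have "y + z \<le> x"
    using assms unfolding tri_strict_def by linarith
  then have "gen_angle x y z = pi" "gen_angle y x z = 0"
    using assms by (simp_all add: gen_angle_def tri_strict_def)
  moreover have "(x - y) / x \<le> 1"
    using assms by simp
  ultimately show ?thesis
    using pi_ge_two by linarith
qed

text \<open>Sides are written as exp (s/2), as in mval, so that s depends linearly on the decoration.\<close>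

definition tri_angle :: "real \<Rightarrow> real \<Rightarrow> real \<Rightarrow> real" where
  "tri_angle s1 s2 s3 = gen_angle (exp (s1/2)) (exp (s2/2)) (exp (s3/2))"

definition angle_dissipation :: "real \<Rightarrow> real \<Rightarrow> real \<Rightarrow> real" where
  "angle_dissipation s1 s2 s3 =
     (tri_angle s1 s2 s3 - tri_angle s2 s1 s3) * (s1 - s2)
   + (tri_angle s1 s2 s3 - tri_angle s3 s1 s2) * (s1 - s3)
   + (tri_angle s2 s1 s3 - tri_angle s3 s1 s2) * (s2 - s3)"

definition spread :: "real \<Rightarrow> real \<Rightarrow> real \<Rightarrow> real" where
  "spread s1 s2 s3 = (s1 - s2)\<^sup>2 + (s1 - s3)\<^sup>2 + (s2 - s3)\<^sup>2"

lemma tri_angle_swap: "tri_angle s1 s2 s3 = tri_angle s1 s3 s2"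
  unfolding tri_angle_def by (rule gen_angle_swap)

lemma tri_angle_sum: "tri_angle s1 s2 s3 + tri_angle s2 s1 s3 + tri_angle s3 s1 s2 = pi"
  unfolding tri_angle_def by (rule gen_angle_sum) auto

lemma tri_angle_equilateral: "tri_angle s s s = pi / 3"
  unfolding tri_angle_def by (rule gen_angle_equilateral) simp

lemma tri_angle_monotone: "0 \<le> (tri_angle a b c - tri_angle b a c) * (a - b)"
proof -
  have "tri_angle a b c \<le> tri_angle b a c" if "a \<le> b" for a b
    using gen_angle_le_opposite[of "exp (c/2)" "exp (a/2)" "exp (b/2)"] that
    by (simp add: tri_angle_def gen_angle_swap[of "exp (a/2)"] gen_angle_swap[of "exp (b/2)"])
  then show ?thesis
    by (cases "a \<le> b") (auto intro: mult_nonpos_nonpos)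
qed

lemma exp_neg_mult_le_one_minus_exp:
  fixes a b :: real
  assumes "0 \<le> a" "a \<le> b"
  shows "exp (- b) * a \<le> 1 - exp (- a)"
proof -
  have "exp (- b) * a \<le> exp (- a) * a"
    using assms by (intro mult_right_mono) auto
  also have "\<dots> \<le> exp (- a) * (exp a - 1)"
    using exp_ge_add_one_self[of a] by (intro mult_left_mono) (linarith, simp)
  also have "\<dots> = 1 - exp (- a)"
    by (simp add: algebra_simps exp_minus_inverse)
  finally show ?thesis .
qed

lemma tri_angle_gap_ge:
  assumes "s2 \<le> s1" "s3 \<le> s1" "s1 - s2 \<le> M"
  shows "exp (- M/2) / 2 * (s1 - s2) \<le> tri_angle s1 s2 s3 - tri_angle s2 s1 s3"
proof -
  have "exp (- M/2) / 2 * (s1 - s2) \<le> 1 - exp (- ((s1 - s2)/2))"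
    using exp_neg_mult_le_one_minus_exp[of "(s1 - s2)/2" "M/2"] assms by simp
  also have "\<dots> = 1 - exp (s2/2 - s1/2)"
    by (simp add: minus_divide_left)
  also have "\<dots> = (exp (s1/2) - exp (s2/2)) / exp (s1/2)"
    by (simp add: exp_diff diff_divide_distrib)
  also have "\<dots> \<le> tri_angle s1 s2 s3 - tri_angle s2 s1 s3"
    unfolding tri_angle_def using assms by (intro gen_angle_gap_ge) auto
  finally show ?thesis .
qed

lemma angle_dissipation_nonneg: "0 \<le> angle_dissipation s1 s2 s3"
  using tri_angle_monotone[of s1 s2 s3] tri_angle_monotone[of s1 s3 s2] tri_angle_monotone[of s2 s3 s1]
  unfolding angle_dissipation_def by (simp add: tri_angle_swap[of _ s3] tri_angle_swap[of s3])

lemma angle_dissipation_perm: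
  "angle_dissipation s2 s1 s3 = angle_dissipation s1 s2 s3"
  "angle_dissipation s1 s3 s2 = angle_dissipation s1 s2 s3"
  unfolding angle_dissipation_def
  by (simp_all add: tri_angle_swap[of s3 s2 s1] tri_angle_swap[of s1 s3 s2] algebra_simps)

lemma spread_perm:
  "spread s2 s1 s3 = spread s1 s2 s3" "spread s1 s3 s2 = spread s1 s2 s3"
  unfolding spread_def by (simp_all add: power2_commute algebra_simps)

lemma angle_dissipation_ge_spread_at_max:
  assumes "s2 \<le> s1" "s3 \<le> s1" "s1 - s2 \<le> M" "s1 - s3 \<le> M"
  shows "exp (- M/2) / 6 * spread s1 s2 s3 \<le> angle_dissipation s1 s2 s3"
proof -
  define k where "k = exp (- M/2) / 2"
  have gap_sq: "k * (a - b)\<^sup>2 \<le> (tri_angle a b c - tri_angle b a c) * (a - b)"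
    if "b \<le> a" "c \<le> a" "a - b \<le> M" for a b c
  proof -
    have "k * (a - b) * (a - b) \<le> (tri_angle a b c - tri_angle b a c) * (a - b)"
      using tri_angle_gap_ge[OF that] that by (intro mult_right_mono) (auto simp: k_def)
    then show ?thesis
      by (simp add: power2_eq_square mult.assoc)
  qed
  have "(s2 - s3)\<^sup>2 \<le> 2 * ((s1 - s2)\<^sup>2 + (s1 - s3)\<^sup>2)"
    using zero_le_power2[of "(s1 - s2) + (s1 - s3)"] by (simp add: power2_eq_square algebra_simps)
  then have "spread s1 s2 s3 \<le> 3 * ((s1 - s2)\<^sup>2 + (s1 - s3)\<^sup>2)"
    unfolding spread_def by simp
  then have "exp (- M/2) / 6 * spread s1 s2 s3 \<le> exp (- M/2) / 6 * (3 * ((s1 - s2)\<^sup>2 + (s1 - s3)\<^sup>2))"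
    by (intro mult_left_mono) auto
  also have "\<dots> = k * (s1 - s2)\<^sup>2 + k * (s1 - s3)\<^sup>2"
    by (simp add: k_def algebra_simps)
  also have "\<dots> \<le> angle_dissipation s1 s2 s3"
    using gap_sq[of s2 s1 s3] gap_sq[of s3 s1 s2] assms tri_angle_monotone[of s2 s3 s1]
    unfolding angle_dissipation_def by (simp add: tri_angle_swap[of _ s3] tri_angle_swap[of s3])
  finally show ?thesis .
qed

lemma angle_dissipation_ge_spread:
  assumes "\<bar>s1 - s2\<bar> \<le> M" "\<bar>s1 - s3\<bar> \<le> M" "\<bar>s2 - s3\<bar> \<le> M"
  shows "exp (- M/2) / 6 * spread s1 s2 s3 \<le> angle_dissipation s1 s2 s3"
proof -
  consider "s2 \<le> s1" "s3 \<le> s1" | "s1 \<le> s2" "s3 \<le> s2" | "s1 \<le> s3" "s2 \<le> s3"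
    by linarith
  then show ?thesis
  proof cases
    case 1
    then show ?thesis
      using assms by (intro angle_dissipation_ge_spread_at_max) auto
  next
    case 2
    then show ?thesis
      using angle_dissipation_ge_spread_at_max[of s1 s2 s3 M] assms
      by (simp add: angle_dissipation_perm spread_perm)
  next
    case 3
    then show ?thesis
      using angle_dissipation_ge_spread_at_max[of s1 s3 s2 M] assms
      by (simp add: angle_dissipation_perm spread_perm)
  qed
qed

lemma angle_defect_pairing:
  "(pi/3 - tri_angle s1 s2 s3) * (s1 - c) + (pi/3 - tri_angle s2 s1 s3) * (s2 - c)
     + (pi/3 - tri_angle s3 s1 s2) * (s3 - c) = - angle_dissipation s1 s2 s3 / 3"
proof -
  have third: "tri_angle s3 s1 s2 = pi - tri_angle s1 s2 s3 - tri_angle s2 s1 s3"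
    using tri_angle_sum[of s1 s2 s3] by linarith
  show ?thesis
    unfolding angle_dissipation_def third by (simp add: field_simps)
qed

section \<open>Decorated tetrahedra\<close>

\<comment> \<open>Otherwise the simplifier turns the vertex 1 into Suc 0 and edge literals such as {0,1} stop matching.\<close>
declare One_nat_def [simp del]

lemma V4_diff_edges:
  "V4 - {0,1} = {2,3}" "V4 - {0,2} = {1,3}" "V4 - {0,3} = {1,2}"
  "V4 - {2,3} = {0,1}" "V4 - {1,3} = {0,2}" "V4 - {1,2} = {0,3}"
  by (auto simp: V4_def)

lemma tet_edges_eq: "tet_edges = {{0,1}, {0,2}, {0,3}, {1,2}, {1,3}, {2,3}}"
proof
  show "tet_edges \<subseteq> {{0,1}, {0,2}, {0,3}, {1,2}, {1,3}, {2,3}}"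
  proof
    fix A assume "A \<in> tet_edges"
    then obtain a b where ab: "A = {a, b}" "a \<noteq> b" "a < 4" "b < 4"
      unfolding tet_edges_def V4_def by (auto simp: card_2_iff)
    then have "a \<in> {0,1,2,3}" "b \<in> {0,1,2,3}"
      by auto
    with ab show "A \<in> {{0,1}, {0,2}, {0,3}, {1,2}, {1,3}, {2,3}}"
      by (auto simp: doubleton_eq_iff)
  qed
qed (auto simp: tet_edges_def V4_def)

lemma sum_tet_edges:
  "(\<Sum>A\<in>tet_edges. f A) = f {0,1} + f {2,3} + f {0,2} + f {1,3} + f {0,3} + f {1,2}"
  unfolding tet_edges_eq by (simp add: doubleton_eq_iff ac_simps)

text \<open>opp_sum L j is l_0j + l_kh for the edge {0, j} and its opposite edge {k, h}: twice the
  logarithm of the side mval L {0, j} of the generalized triangle.\<close>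

definition opp_sum :: "(nat set \<Rightarrow> real) \<Rightarrow> nat \<Rightarrow> real" where
  "opp_sum L j = L {0,j} + L (V4 - {0,j})"

lemma opp_sum_eq:
  "opp_sum L 1 = L {0,1} + L {2,3}" "opp_sum L 2 = L {0,2} + L {1,3}" "opp_sum L 3 = L {0,3} + L {1,2}"
  by (simp_all add: opp_sum_def V4_diff_edges)

lemma opp_edges_in_tet_edges: "j \<in> {1,2,3} \<Longrightarrow> {0, j} \<in> tet_edges \<and> V4 - {0, j} \<in> tet_edges"
  unfolding tet_edges_eq by (elim insertE emptyE) (simp_all add: V4_diff_edges)

lemma mval_eq_exp_opp_sum:
  "mval L {0,1} = exp (opp_sum L 1 / 2)" "mval L {2,3} = exp (opp_sum L 1 / 2)"
  "mval L {0,2} = exp (opp_sum L 2 / 2)" "mval L {1,3} = exp (opp_sum L 2 / 2)"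
  "mval L {0,3} = exp (opp_sum L 3 / 2)" "mval L {1,2} = exp (opp_sum L 3 / 2)"
  by (simp_all add: mval_def opp_sum_eq V4_diff_edges add.commute)

lemma alpha_t_eq_tri_angle:
  "alpha_t L {0,1} = tri_angle (opp_sum L 1) (opp_sum L 2) (opp_sum L 3)"
  "alpha_t L {2,3} = tri_angle (opp_sum L 1) (opp_sum L 2) (opp_sum L 3)"
  "alpha_t L {0,2} = tri_angle (opp_sum L 2) (opp_sum L 1) (opp_sum L 3)"
  "alpha_t L {1,3} = tri_angle (opp_sum L 2) (opp_sum L 1) (opp_sum L 3)"
  "alpha_t L {0,3} = tri_angle (opp_sum L 3) (opp_sum L 1) (opp_sum L 2)"
  "alpha_t L {1,2} = tri_angle (opp_sum L 3) (opp_sum L 1) (opp_sum L 2)"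
  unfolding alpha_t_def Let_def tri_angle_def
  by (simp_all add: V4_diff_edges mval_eq_exp_opp_sum gen_angle_swap[of "exp (opp_sum L _ / 2)"]
      insert_commute[of "2::nat" 0] insert_commute[of "2::nat" 1] insert_commute[of "1::nat" 0]
      insert_commute[of "3::nat" 0] insert_commute[of "3::nat" 1] insert_commute[of "3::nat" 2])

lemma sum_tet_edges_alpha_t:
  "(\<Sum>A\<in>tet_edges. f (alpha_t L A) * g A) =
     f (tri_angle (opp_sum L 1) (opp_sum L 2) (opp_sum L 3)) * opp_sum g 1
   + f (tri_angle (opp_sum L 2) (opp_sum L 1) (opp_sum L 3)) * opp_sum g 2
   + f (tri_angle (opp_sum L 3) (opp_sum L 1) (opp_sum L 2)) * opp_sum g 3"
  unfolding sum_tet_edges alpha_t_eq_tri_angle opp_sum_eq by (simp add: algebra_simps)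

lemma tet_angle_sum: "(\<Sum>A\<in>tet_edges. alpha_t L A) = 2 * pi"
  using sum_tet_edges_alpha_t[of "\<lambda>a. a" L "\<lambda>_. 1"]
    tri_angle_sum[of "opp_sum L 1" "opp_sum L 2" "opp_sum L 3"]
  by (simp add: opp_sum_def[of "\<lambda>_. 1"])

section \<open>Monotonicity, decay and quadratic forms\<close>

lemma antimono_if_deriv_nonpos:
  fixes g g' :: "real \<Rightarrow> real"
  assumes deriv: "\<And>t. 0 \<le> t \<Longrightarrow> (g has_real_derivative g' t) (at t within {0..})"
    and nonpos: "\<And>t. 0 < t \<Longrightarrow> g' t \<le> 0"
    and "0 \<le> a" "a \<le> b"
  shows "g b \<le> g a"
proof (rule DERIV_nonpos_imp_decreasing_open[OF \<open>a \<le> b\<close>])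
  show "continuous_on {a..b} g"
    using assms by (intro DERIV_continuous_on[where D = g']) (auto intro: DERIV_subset[OF deriv])
  fix x assume x: "a < x" "x < b"
  then have "(g has_real_derivative g' x) (at x within {0<..})"
    using \<open>0 \<le> a\<close> by (intro DERIV_subset[OF deriv]) auto
  moreover have "at x within {0<..} = at x"
    using x \<open>0 \<le> a\<close> by (intro at_within_open) auto
  ultimately show "\<exists>y. (g has_real_derivative y) (at x) \<and> y \<le> 0"
    using nonpos x \<open>0 \<le> a\<close> by auto
qed

lemma const_if_deriv_zero:
  fixes g :: "real \<Rightarrow> real"
  assumes deriv: "\<And>t. 0 \<le> t \<Longrightarrow> (g has_real_derivative 0) (at t within {0..})" and "0 \<le> t"
  shows "g t = g 0"
proof -
  have "g t \<le> g 0"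
    by (rule antimono_if_deriv_nonpos[where g' = "\<lambda>_. 0", OF deriv]) (use \<open>0 \<le> t\<close> in auto)
  moreover have "- g t \<le> - g 0"
  proof (rule antimono_if_deriv_nonpos[where g = "\<lambda>s. - g s" and g' = "\<lambda>_. 0"])
    show "((\<lambda>s. - g s) has_real_derivative 0) (at s within {0..})" if "0 \<le> s" for s
      using DERIV_minus[OF deriv[OF that]] by simp
  qed (use \<open>0 \<le> t\<close> in auto)
  ultimately show ?thesis
    by simp
qed

lemma exp_decay_if_deriv_le:
  fixes V V' :: "real \<Rightarrow> real"
  assumes deriv: "\<And>t. 0 \<le> t \<Longrightarrow> (V has_real_derivative V' t) (at t within {0..})"
    and decay: "\<And>t. 0 < t \<Longrightarrow> V' t \<le> - \<gamma> * V t" and "0 \<le> t"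
  shows "V t \<le> V 0 * exp (- \<gamma> * t)"
proof -
  have "V t * exp (\<gamma> * t) \<le> V 0 * exp (\<gamma> * 0)"
  proof (rule antimono_if_deriv_nonpos[where g = "\<lambda>s. V s * exp (\<gamma> * s)"
        and g' = "\<lambda>s. (V' s + \<gamma> * V s) * exp (\<gamma> * s)"])
    show "((\<lambda>s. V s * exp (\<gamma> * s)) has_real_derivative (V' s + \<gamma> * V s) * exp (\<gamma> * s))
        (at s within {0..})" if "0 \<le> s" for s
      by (rule DERIV_cong[OF DERIV_mult[OF deriv[OF that]
            DERIV_cmult[OF DERIV_ident, THEN DERIV_chain2[OF DERIV_exp]]]]) (simp add: algebra_simps)
    show "(V' s + \<gamma> * V s) * exp (\<gamma> * s) \<le> 0" if "0 < s" for s
      using decay[OF that] by (simp add: mult_nonpos_nonneg)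
  qed (use \<open>0 \<le> t\<close> in auto)
  then have "V t * exp (\<gamma> * t) * exp (- \<gamma> * t) \<le> V 0 * exp (- \<gamma> * t)"
    by (intro mult_right_mono) auto
  then show ?thesis
    by (simp add: mult.assoc flip: exp_add)
qed

lemma sqrt_le_sqrt_mult_exp_half:
  assumes "x \<le> y * exp (- \<gamma> * t)"
  shows "sqrt x \<le> sqrt y * exp (- (\<gamma> / 2) * t)"
proof -
  have "exp (- \<gamma> * t) = (exp (- (\<gamma> / 2) * t))\<^sup>2"
    by (simp add: power2_eq_square flip: exp_add)
  then have "sqrt (y * exp (- \<gamma> * t)) = sqrt y * exp (- (\<gamma> / 2) * t)"
    by (simp add: real_sqrt_mult)
  then show ?thesis
    using real_sqrt_le_mono[OF assms] by simp
qed

lemma abs_le_sqrt_sum_squares: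
  fixes u :: "'b \<Rightarrow> real"
  assumes "finite S" "x \<in> S"
  shows "\<bar>u x\<bar> \<le> sqrt (\<Sum>e\<in>S. (u e)\<^sup>2)"
proof -
  have "(u x)\<^sup>2 \<le> (\<Sum>e\<in>S. (u e)\<^sup>2)"
    using assms by (intro member_le_sum) auto
  then have "sqrt ((u x)\<^sup>2) \<le> sqrt (\<Sum>e\<in>S. (u e)\<^sup>2)"
    by (rule real_sqrt_le_mono)
  then show ?thesis
    by simp
qed

lemma abs_sum_le_card_mult_sqrt_sum_squares:
  fixes u :: "'b \<Rightarrow> real"
  assumes "finite S"
  shows "\<bar>\<Sum>e\<in>S. u e\<bar> \<le> real (card S) * sqrt (\<Sum>e\<in>S. (u e)\<^sup>2)"
proof -
  have "\<bar>\<Sum>e\<in>S. u e\<bar> \<le> (\<Sum>e\<in>S. \<bar>u e\<bar>)"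
    by (rule sum_abs)
  also have "\<dots> \<le> (\<Sum>e\<in>S. sqrt (\<Sum>e\<in>S. (u e)\<^sup>2))"
    using abs_le_sqrt_sum_squares[OF assms] by (intro sum_mono)
  finally show ?thesis
    by simp
qed

lemma convergent_subseq_finite_coords:
  fixes f :: "nat \<Rightarrow> 'b \<Rightarrow> real"
  assumes "finite S" "\<And>n x. x \<in> S \<Longrightarrow> \<bar>f n x\<bar> \<le> B"
  shows "\<exists>r g. strict_mono r \<and> (\<forall>x\<in>S. (\<lambda>n. f (r n) x) \<longlonglongrightarrow> g x)"
  using assms
proof (induction S rule: finite_induct)
  case empty
  show ?case
    by (rule exI[of _ id]) (auto simp: strict_mono_def)
next
  case (insert a S)
  then obtain r g where r: "strict_mono r" and g: "\<forall>x\<in>S. (\<lambda>n. f (r n) x) \<longlonglongrightarrow> g x"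
    by blast
  obtain \<phi> where \<phi>: "strict_mono \<phi>" "monoseq (\<lambda>n. f (r (\<phi> n)) a)"
    using seq_monosub[of "\<lambda>n. f (r n) a"] by blast
  have "Bseq (\<lambda>n. f (r (\<phi> n)) a)"
    using insert.prems by (intro BseqI'[where K = B]) auto
  then have "convergent (\<lambda>n. f (r (\<phi> n)) a)"
    using \<phi>(2) by (rule Bseq_monoseq_convergent)
  then obtain L where L: "(\<lambda>n. f (r (\<phi> n)) a) \<longlonglongrightarrow> L"
    by (auto simp: convergent_def)
  have "(\<lambda>n. f (r (\<phi> n)) x) \<longlonglongrightarrow> (g(a := L)) x" if "x \<in> insert a S" for x
  proof (cases "x = a")
    case False
    then have "((\<lambda>n. f (r n) x) \<circ> \<phi>) \<longlonglongrightarrow> g x"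
      using g that \<phi>(1) by (intro LIMSEQ_subseq_LIMSEQ) auto
    then show ?thesis
      using False by (simp add: comp_def)
  qed (use L in simp)
  moreover have "strict_mono (r \<circ> \<phi>)"
    using r \<phi>(1) by (rule strict_mono_o)
  ultimately show ?case
    unfolding comp_def by blast
qed

lemma eq_0_if_quadratic_nonneg:
  fixes c N :: real
  assumes "0 \<le> N" and nonneg: "\<And>t. 0 \<le> - 2 * t * c + t\<^sup>2 * N"
  shows "c = 0"
proof (rule ccontr)
  assume "c \<noteq> 0"
  define s where "s = inverse (N + 1)"
  have "0 < s" "s * N < 1"
    unfolding s_def using \<open>0 \<le> N\<close> by (simp_all add: field_simps)
  then have "s * c\<^sup>2 * (s * N - 2) < 0"
    using \<open>c \<noteq> 0\<close> by (intro mult_pos_neg) auto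
  moreover have "- 2 * (c * s) * c + (c * s)\<^sup>2 * N = s * c\<^sup>2 * (s * N - 2)"
    by (simp add: power2_eq_square algebra_simps)
  ultimately show False
    using nonneg[of "c * s"] by linarith
qed

lemma exists_nearest_point:
  fixes S :: "'b set" and W :: "('b \<Rightarrow> real) set" and l :: "'b \<Rightarrow> real"
  assumes fin: "finite S" and "W \<noteq> {}"
    and closed: "\<And>f g. (\<forall>n. f n \<in> W) \<Longrightarrow> (\<forall>e\<in>S. (\<lambda>n. f n e) \<longlonglongrightarrow> g e) \<Longrightarrow> g \<in> W"
  shows "\<exists>g\<in>W. \<forall>v\<in>W. (\<Sum>e\<in>S. (l e - g e)\<^sup>2) \<le> (\<Sum>e\<in>S. (l e - v e)\<^sup>2)"
proof -
  define F where "F w = (\<Sum>e\<in>S. (l e - w e)\<^sup>2)" for w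
  define \<delta> where "\<delta> = Inf (F ` W)"
  have bdd: "bdd_below (F ` W)"
    unfolding F_def by (intro bdd_belowI[where m = 0]) (auto intro: sum_nonneg)
  have "\<exists>w\<in>W. F w < \<delta> + inverse (real (Suc n))" for n
    using cInf_lessD[of "F ` W" "\<delta> + inverse (real (Suc n))"] \<open>W \<noteq> {}\<close> unfolding \<delta>_def by auto
  then obtain w where w: "\<And>n. w n \<in> W" "\<And>n. F (w n) < \<delta> + inverse (real (Suc n))"
    by metis
  have "\<bar>w n e\<bar> \<le> (\<Sum>e\<in>S. \<bar>l e\<bar>) + sqrt (\<delta> + 1)" if "e \<in> S" for n e
  proof -
    have "\<bar>l e - w n e\<bar> \<le> sqrt (F (w n))"
      unfolding F_def using abs_le_sqrt_sum_squares[OF fin that] .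
    also have "\<dots> \<le> sqrt (\<delta> + 1)"
      using w(2)[of n] inverse_le_1_iff[of "real (Suc n)"] by (intro real_sqrt_le_mono) linarith
    finally show ?thesis
      using member_le_sum[of e S "\<lambda>e. \<bar>l e\<bar>"] fin that by linarith
  qed
  then obtain r g where r: "strict_mono r" and g: "\<forall>e\<in>S. (\<lambda>n. w (r n) e) \<longlonglongrightarrow> g e"
    using convergent_subseq_finite_coords[OF fin] by blast
  have "g \<in> W"
    using closed[of "\<lambda>n. w (r n)"] w(1) g by blast
  have "F g \<le> \<delta>"
  proof (rule LIMSEQ_le)
    show "(\<lambda>n. F (w (r n))) \<longlonglongrightarrow> F g"
      unfolding F_def using g by (intro tendsto_intros) auto
    show "(\<lambda>n. \<delta> + inverse (real (Suc n))) \<longlonglongrightarrow> \<delta>"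
      using tendsto_add[OF tendsto_const LIMSEQ_inverse_real_of_nat] by simp
    have "inverse (real (Suc (r n))) \<le> inverse (real (Suc n))" for n
      using seq_suble[OF r, of n] by (simp add: le_imp_inverse_le)
    then show "\<exists>N. \<forall>n\<ge>N. F (w (r n)) \<le> \<delta> + inverse (real (Suc n))"
      using w(2) by (metis add_le_cancel_left less_le_not_le order.trans)
  qed
  moreover have "\<delta> \<le> F v" if "v \<in> W" for v
    unfolding \<delta>_def using bdd that by (intro cInf_lower) auto
  ultimately show ?thesis
    using \<open>g \<in> W\<close> unfolding F_def by force
qed

lemma nearest_point_orthogonal:
  fixes S :: "'b set" and W :: "('b \<Rightarrow> real) set"
  assumes nearest: "\<forall>v\<in>W. (\<Sum>e\<in>S. (l e - g e)\<^sup>2) \<le> (\<Sum>e\<in>S. (l e - v e)\<^sup>2)"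
    and line: "\<And>t. (\<lambda>e. g e + t * v e) \<in> W"
  shows "(\<Sum>e\<in>S. (l e - g e) * v e) = 0"
proof (rule eq_0_if_quadratic_nonneg)
  show "0 \<le> (\<Sum>e\<in>S. (v e)\<^sup>2)"
    by (simp add: sum_nonneg)
  fix t
  have "(l e - (g e + t * v e))\<^sup>2 = (l e - g e)\<^sup>2 - 2 * t * ((l e - g e) * v e) + t\<^sup>2 * (v e)\<^sup>2" for e
    by (simp add: power2_eq_square algebra_simps)
  then have "(\<Sum>e\<in>S. (l e - (g e + t * v e))\<^sup>2) = (\<Sum>e\<in>S. (l e - g e)\<^sup>2)
      - 2 * t * (\<Sum>e\<in>S. (l e - g e) * v e) + t\<^sup>2 * (\<Sum>e\<in>S. (v e)\<^sup>2)"
    by (simp add: sum.distrib sum_subtractf sum_distrib_left mult.assoc)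
  then show "0 \<le> - 2 * t * (\<Sum>e\<in>S. (l e - g e) * v e) + t\<^sup>2 * (\<Sum>e\<in>S. (v e)\<^sup>2)"
    using nearest line[of t] by fastforce
qed

lemma exists_orthogonal_projection:
  fixes S :: "'b set" and W :: "('b \<Rightarrow> real) set" and l :: "'b \<Rightarrow> real"
  assumes "finite S" "(\<lambda>_. 0) \<in> W"
    and lin: "\<And>w v t. w \<in> W \<Longrightarrow> v \<in> W \<Longrightarrow> (\<lambda>e. w e + t * v e) \<in> W"
    and closed: "\<And>f g. (\<forall>n. f n \<in> W) \<Longrightarrow> (\<forall>e\<in>S. (\<lambda>n. f n e) \<longlonglongrightarrow> g e) \<Longrightarrow> g \<in> W"
  shows "\<exists>w0\<in>W. \<forall>w\<in>W. (\<Sum>e\<in>S. (l e - w0 e) * w e) = 0"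
proof -
  obtain g where "g \<in> W" "\<forall>v\<in>W. (\<Sum>e\<in>S. (l e - g e)\<^sup>2) \<le> (\<Sum>e\<in>S. (l e - v e)\<^sup>2)"
    using exists_nearest_point[of S W l] assms by blast
  then show ?thesis
    using nearest_point_orthogonal lin by blast
qed

lemma quadratic_form_pos_on_unit_sphere:
  fixes S :: "'b set" and Q :: "('b \<Rightarrow> real) \<Rightarrow> real" and W :: "('b \<Rightarrow> real) set"
  assumes fin: "finite S"
    and nonneg: "\<And>u. 0 \<le> Q u"
    and cont: "\<And>f g. (\<forall>e\<in>S. (\<lambda>n. f n e) \<longlonglongrightarrow> g e) \<Longrightarrow> (\<lambda>n. Q (f n)) \<longlonglongrightarrow> Q g"
    and kernel: "\<And>u. Q u = 0 \<Longrightarrow> u \<in> W"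
  shows "\<exists>\<kappa>>0. \<forall>v. (\<forall>w\<in>W. (\<Sum>e\<in>S. v e * w e) = 0) \<longrightarrow> (\<Sum>e\<in>S. (v e)\<^sup>2) = 1 \<longrightarrow> \<kappa> \<le> Q v"
proof (rule ccontr)
  assume "\<not> ?thesis"
  then have "\<exists>v. (\<forall>w\<in>W. (\<Sum>e\<in>S. v e * w e) = 0) \<and> (\<Sum>e\<in>S. (v e)\<^sup>2) = 1 \<and> Q v < inverse (real (Suc n))"
    for n
    by (metis not_le of_nat_0_less_iff positive_imp_inverse_positive zero_less_Suc)
  then obtain v where perp: "\<And>n w. w \<in> W \<Longrightarrow> (\<Sum>e\<in>S. v n e * w e) = 0"
    and unit: "\<And>n. (\<Sum>e\<in>S. (v n e)\<^sup>2) = 1" and small: "\<And>n. Q (v n) < inverse (real (Suc n))"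
    by metis
  have "\<bar>v n e\<bar> \<le> 1" if "e \<in> S" for n e
    using abs_le_sqrt_sum_squares[OF fin that, of "v n"] unit by simp
  then obtain r g where r: "strict_mono r" and g: "\<forall>e\<in>S. (\<lambda>n. v (r n) e) \<longlonglongrightarrow> g e"
    using convergent_subseq_finite_coords[OF fin] by blast
  have "(\<lambda>n. \<Sum>e\<in>S. (v (r n) e)\<^sup>2) \<longlonglongrightarrow> (\<Sum>e\<in>S. (g e)\<^sup>2)"
    using g by (intro tendsto_intros) auto
  then have "(\<lambda>n. 1) \<longlonglongrightarrow> (\<Sum>e\<in>S. (g e)\<^sup>2)"
    using unit by simp
  then have g_unit: "(\<Sum>e\<in>S. (g e)\<^sup>2) = 1"
    by (simp add: LIMSEQ_const_iff)
  have "Q g \<le> 0"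
  proof (rule LIMSEQ_le)
    show "(\<lambda>n. Q (v (r n))) \<longlonglongrightarrow> Q g"
      using cont[of "\<lambda>n. v (r n)"] g by simp
    show "(\<lambda>n. inverse (real (Suc n))) \<longlonglongrightarrow> 0"
      by (rule LIMSEQ_inverse_real_of_nat)
    have "inverse (real (Suc (r n))) \<le> inverse (real (Suc n))" for n
      using seq_suble[OF r, of n] by (simp add: le_imp_inverse_le)
    then show "\<exists>N. \<forall>n\<ge>N. Q (v (r n)) \<le> inverse (real (Suc n))"
      using small by (meson less_le_not_le order.trans)
  qed
  then have "g \<in> W"
    using nonneg[of g] kernel by simp
  have "(\<lambda>n. \<Sum>e\<in>S. v (r n) e * g e) \<longlonglongrightarrow> (\<Sum>e\<in>S. (g e)\<^sup>2)"
    using g by (auto intro!: tendsto_intros simp: power2_eq_square)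
  then have "(\<lambda>n. 0) \<longlonglongrightarrow> (\<Sum>e\<in>S. (g e)\<^sup>2)"
    using perp[OF \<open>g \<in> W\<close>] by simp
  then have "(\<Sum>e\<in>S. (g e)\<^sup>2) = 0"
    by (simp add: LIMSEQ_const_iff)
  then show False
    using g_unit by simp
qed

lemma quadratic_form_coercive:
  fixes S :: "'b set" and Q :: "('b \<Rightarrow> real) \<Rightarrow> real" and W :: "('b \<Rightarrow> real) set"
  assumes fin: "finite S"
    and nonneg: "\<And>u. 0 \<le> Q u"
    and hom: "\<And>c u. Q (\<lambda>e. c * u e) = c\<^sup>2 * Q u"
    and cont: "\<And>f g. (\<forall>e\<in>S. (\<lambda>n. f n e) \<longlonglongrightarrow> g e) \<Longrightarrow> (\<lambda>n. Q (f n)) \<longlonglongrightarrow> Q g"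
    and kernel: "\<And>u. Q u = 0 \<Longrightarrow> u \<in> W"
  shows "\<exists>\<kappa>>0. \<forall>u. (\<forall>w\<in>W. (\<Sum>e\<in>S. u e * w e) = 0) \<longrightarrow> \<kappa> * (\<Sum>e\<in>S. (u e)\<^sup>2) \<le> Q u"
proof -
  obtain \<kappa> where "\<kappa> > 0"
    and unit: "\<And>v. \<forall>w\<in>W. (\<Sum>e\<in>S. v e * w e) = 0 \<Longrightarrow> (\<Sum>e\<in>S. (v e)\<^sup>2) = 1 \<Longrightarrow> \<kappa> \<le> Q v"
    using quadratic_form_pos_on_unit_sphere[of S Q W, OF fin nonneg cont kernel] by blast
  have "\<kappa> * (\<Sum>e\<in>S. (u e)\<^sup>2) \<le> Q u" if perp: "\<forall>w\<in>W. (\<Sum>e\<in>S. u e * w e) = 0" for u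
  proof (cases "(\<Sum>e\<in>S. (u e)\<^sup>2) = 0")
    case False
    define N where "N = (\<Sum>e\<in>S. (u e)\<^sup>2)"
    have "0 < N"
      using False unfolding N_def by (simp add: order_less_le sum_nonneg)
    define v where "v e = inverse (sqrt N) * u e" for e
    have "(\<Sum>e\<in>S. (v e)\<^sup>2) = inverse N * N"
      unfolding v_def N_def
      by (simp add: power_mult_distrib power_inverse sum_distrib_left[symmetric] sum_nonneg)
    moreover have "\<forall>w\<in>W. (\<Sum>e\<in>S. v e * w e) = 0"
      using perp unfolding v_def by (simp add: mult.assoc sum_distrib_left[symmetric])
    ultimately have "\<kappa> \<le> Q v"
      using unit \<open>0 < N\<close> by simp
    also have "Q v = inverse N * Q u"
      unfolding v_def hom using \<open>0 < N\<close> by (simp add: power_inverse)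
    finally show ?thesis
      using \<open>0 < N\<close> unfolding N_def by (simp add: field_simps)
  qed (simp add: nonneg)
  then show ?thesis
    using \<open>\<kappa> > 0\<close> by blast
qed

section \<open>Edge classes and total curvature\<close>

locale closed_pseudo_3_manifold =
  fixes Tet :: "'a set" and glue :: "'a \<times> nat \<Rightarrow> 'a \<times> nat" and gmap :: "'a \<times> nat \<Rightarrow> nat \<Rightarrow> nat"
  assumes pseudo3: "pseudo3 Tet glue gmap"
begin

abbreviation "E \<equiv> edge_classes Tet glue gmap"
abbreviation "cls \<equiv> edge_class Tet glue gmap"
abbreviation "K \<equiv> curv Tet glue gmap"
abbreviation "ls \<equiv> lsig Tet glue gmap"

lemma finite_Tet: "finite Tet" and Tet_nonempty: "Tet \<noteq> {}"
  using pseudo3 unfolding pseudo3_def by auto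

lemma finite_edges: "finite (edges Tet)"
  unfolding edges_def tet_edges_eq using finite_Tet by simp

lemma finite_E: "finite E"
  unfolding edge_classes_def using finite_edges by simp

lemma E_nonempty: "E \<noteq> {}"
  unfolding edge_classes_def edges_def tet_edges_eq using Tet_nonempty by auto

lemma edge_class_self: "x \<in> cls x"
  unfolding edge_class_def edge_rel_def by simp

lemma edge_class_eq:
  assumes "y \<in> cls x"
  shows "cls y = cls x"
proof -
  have "sym (edge_rel Tet glue gmap)"
    unfolding edge_rel_def by (intro sym_rtrancl sym_Un_converse)
  moreover have "trans (edge_rel Tet glue gmap)"
    unfolding edge_rel_def by (rule trans_rtrancl)
  ultimately show ?thesis
    using assms unfolding edge_class_def by (blast dest: symD transD)
qed

lemma edge_class_subset: "x \<in> edges Tet \<Longrightarrow> cls x \<subseteq> edges Tet"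
  unfolding edge_class_def edge_rel_def by (auto elim: rtranclE simp: edge_step_def)

lemma class_of_mem:
  assumes "e \<in> E" "x \<in> e"
  shows "cls x = e"
proof -
  obtain z where "e = cls z"
    using assms(1) unfolding edge_classes_def by auto
  then show ?thesis
    using assms(2) edge_class_eq by simp
qed

lemma edge_class_in_E: "\<sigma> \<in> Tet \<Longrightarrow> A \<in> tet_edges \<Longrightarrow> cls (\<sigma>, A) \<in> E"
  unfolding edge_classes_def edges_def by blast

lemma E_subset_edges: "e \<in> E \<Longrightarrow> e \<subseteq> edges Tet"
  unfolding edge_classes_def using edge_class_subset by auto

lemma sum_edge_classes: "(\<Sum>e\<in>E. \<Sum>x\<in>e. f x) = (\<Sum>\<sigma>\<in>Tet. \<Sum>A\<in>tet_edges. f (\<sigma>, A))"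
proof -
  have "(\<Sum>e\<in>E. \<Sum>x\<in>e. f x) = (\<Sum>e\<in>cls ` edges Tet. sum f {x \<in> edges Tet. cls x = e})"
  proof (rule sum.cong)
    fix e assume e: "e \<in> cls ` edges Tet"
    then have "{x \<in> edges Tet. cls x = e} = e"
      using edge_class_self edge_class_subset class_of_mem[of e] unfolding edge_classes_def by blast
    then show "sum f e = sum f {x \<in> edges Tet. cls x = e}"
      by simp
  qed (simp add: edge_classes_def)
  also have "\<dots> = (\<Sum>x\<in>edges Tet. f x)"
    by (rule sum.image_gen[OF finite_edges, symmetric])
  finally show ?thesis
    by (simp add: edges_def sum.cartesian_product)
qed

lemma lsig_mem: "e \<in> E \<Longrightarrow> x \<in> e \<Longrightarrow> ls l (fst x) (snd x) = l e"
  unfolding lsig_def using class_of_mem by simp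

lemma curv_pairing:
  "(\<Sum>e\<in>E. K l e * g e) =
     2 * pi * (\<Sum>e\<in>E. g e) - (\<Sum>\<sigma>\<in>Tet. \<Sum>A\<in>tet_edges. alpha_t (ls l \<sigma>) A * ls g \<sigma> A)"
proof -
  have "(\<Sum>e\<in>E. K l e * g e) =
      (\<Sum>e\<in>E. 2 * pi * g e - (\<Sum>x\<in>e. alpha_t (ls l (fst x)) (snd x) * ls g (fst x) (snd x)))"
    unfolding curv_def by (intro sum.cong) (simp_all add: left_diff_distrib sum_distrib_right lsig_mem)
  then show ?thesis
    by (simp add: sum_subtractf sum_distrib_left sum_edge_classes)
qed

lemma total_curvature: "(\<Sum>e\<in>E. K l e) = 2 * pi * (real (card E) - real (card Tet))"
  using curv_pairing[of l "\<lambda>_. 1"] by (simp add: lsig_def tet_angle_sum algebra_simps)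

lemma sum_valence: "(\<Sum>e\<in>E. valence e) = 6 * card Tet"
  using sum_edge_classes[of "\<lambda>_. 1::nat"] finite_Tet
  by (simp add: valence_def tet_edges_eq doubleton_eq_iff)

lemma card_E_ne_card_Tet:
  assumes "\<forall>e\<in>E. valence e = d" "d \<noteq> 6"
  shows "card E \<noteq> card Tet"
proof
  assume "card E = card Tet"
  moreover have "d * card E = 6 * card Tet"
    using sum_valence assms(1) by (simp add: mult.commute)
  moreover have "card E > 0"
    using finite_E E_nonempty by (simp add: card_gt_0_iff)
  ultimately show False
    using assms(2) by simp
qed

lemma no_zero_curv_if_valence_ne_6:
  assumes "\<forall>e\<in>E. valence e = d" "d \<noteq> 6"
  shows "\<not> zero_curv Tet glue gmap l"
proof
  assume "zero_curv Tet glue gmap l"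
  then have "(\<Sum>e\<in>E. K l e) = 0"
    unfolding zero_curv_def by simp
  then show False
    using total_curvature card_E_ne_card_Tet[OF assms] by simp
qed

lemma ricci_flow_total_length:
  assumes flow: "ricci_flow_sol Tet glue gmap l" and "0 \<le> t"
  shows "(\<Sum>e\<in>E. l t e) = (\<Sum>e\<in>E. l 0 e) + 2 * pi * (real (card E) - real (card Tet)) * t"
proof -
  define c where "c = 2 * pi * (real (card E) - real (card Tet))"
  have "((\<lambda>s. (\<Sum>e\<in>E. l s e) - c * s) has_real_derivative 0) (at s within {0..})" if "0 \<le> s" for s
  proof -
    have "((\<lambda>s. \<Sum>e\<in>E. l s e) has_real_derivative (\<Sum>e\<in>E. K (l s) e)) (at s within {0..})"
      using flow that unfolding ricci_flow_sol_def by (intro DERIV_sum) auto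
    then have "((\<lambda>s. (\<Sum>e\<in>E. l s e) - c * s) has_real_derivative (\<Sum>e\<in>E. K (l s) e) - c * 1)
        (at s within {0..})"
      by (intro DERIV_diff DERIV_cmult DERIV_ident)
    then show ?thesis
      unfolding total_curvature c_def by simp
  qed
  then show ?thesis
    using const_if_deriv_zero[of "\<lambda>s. (\<Sum>e\<in>E. l s e) - c * s" t] \<open>0 \<le> t\<close> unfolding c_def by simp
qed

lemma ricci_flow_diverges:
  assumes "\<forall>e\<in>E. valence e = d" "d \<noteq> 6" and flow: "ricci_flow_sol Tet glue gmap l"
  shows "filterlim (\<lambda>n. enorm E (l (real n))) at_top sequentially"
proof -
  define c where "c = 2 * pi * (real (card E) - real (card Tet))"
  define S0 where "S0 = (\<Sum>e\<in>E. l 0 e)"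
  define N where "N = real (card E)"
  have "c \<noteq> 0" "0 < N"
    using card_E_ne_card_Tet[OF assms(1,2)] finite_E E_nonempty
    by (simp_all add: c_def N_def card_gt_0_iff)
  have lim: "LIM n sequentially. - \<bar>S0\<bar> / N + \<bar>c\<bar> / N * real n :> at_top"
    using \<open>c \<noteq> 0\<close> \<open>0 < N\<close>
    by (intro filterlim_tendsto_add_at_top tendsto_const
        filterlim_tendsto_pos_mult_at_top[OF tendsto_const _ filterlim_real_sequentially]) auto
  have bound: "- \<bar>S0\<bar> / N + \<bar>c\<bar> / N * real n \<le> enorm E (l (real n))" for n
  proof -
    have "\<bar>c\<bar> * real n - \<bar>S0\<bar> \<le> \<bar>\<Sum>e\<in>E. l (real n) e\<bar>"
      using ricci_flow_total_length[OF flow, of "real n"] unfolding c_def S0_def by (simp add: abs_mult)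
    also have "\<dots> \<le> N * enorm E (l (real n))"
      unfolding N_def enorm_def by (rule abs_sum_le_card_mult_sqrt_sum_squares[OF finite_E])
    finally show ?thesis
      using \<open>0 < N\<close> by (simp add: field_simps)
  qed
  show ?thesis
    by (rule filterlim_at_top_mono[OF lim]) (intro always_eventually allI bound)
qed

section \<open>Valence six\<close>

definition equilateral :: "(('a \<times> nat set) set \<Rightarrow> real) set" where
  "equilateral = {w. \<forall>\<sigma>\<in>Tet. opp_sum (ls w \<sigma>) 2 = opp_sum (ls w \<sigma>) 1 \<and> opp_sum (ls w \<sigma>) 3 = opp_sum (ls w \<sigma>) 1}"

definition dissipation :: "(('a \<times> nat set) set \<Rightarrow> real) \<Rightarrow> real" where
  "dissipation l = (\<Sum>\<sigma>\<in>Tet. angle_dissipation (opp_sum (ls l \<sigma>) 1) (opp_sum (ls l \<sigma>) 2) (opp_sum (ls l \<sigma>) 3))"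

definition shape_spread :: "(('a \<times> nat set) set \<Rightarrow> real) \<Rightarrow> real" where
  "shape_spread u = (\<Sum>\<sigma>\<in>Tet. spread (opp_sum (ls u \<sigma>) 1) (opp_sum (ls u \<sigma>) 2) (opp_sum (ls u \<sigma>) 3))"

lemma opp_sum_lsig_linear:
  "opp_sum (ls (\<lambda>e. a e - b e) \<sigma>) j = opp_sum (ls a \<sigma>) j - opp_sum (ls b \<sigma>) j"
  "opp_sum (ls (\<lambda>e. a e + t * b e) \<sigma>) j = opp_sum (ls a \<sigma>) j + t * opp_sum (ls b \<sigma>) j"
  "opp_sum (ls (\<lambda>e. t * b e) \<sigma>) j = t * opp_sum (ls b \<sigma>) j"
  "opp_sum (ls (\<lambda>_. 0) \<sigma>) j = 0"
  by (simp_all add: opp_sum_def lsig_def algebra_simps)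

lemma zero_in_equilateral: "(\<lambda>_. 0) \<in> equilateral"
  by (simp add: equilateral_def opp_sum_lsig_linear)

lemma equilateral_decorated_zero_curv:
  assumes V: "\<forall>e\<in>E. valence e = 6" and w: "w \<in> equilateral"
  shows "decorated Tet glue gmap w \<and> zero_curv Tet glue gmap w"
proof
  show "decorated Tet glue gmap w"
    using w unfolding decorated_def in_L_def mval_eq_exp_opp_sum equilateral_def tri_strict_def by simp
  have angle: "alpha_t (ls w \<sigma>) A = pi / 3" if "\<sigma> \<in> Tet" "A \<in> tet_edges" for \<sigma> A
    using w that unfolding equilateral_def tet_edges_eq
    by (auto simp: alpha_t_eq_tri_angle tri_angle_equilateral)
  have "(\<Sum>x\<in>e. alpha_t (ls w (fst x)) (snd x)) = 2 * pi" if "e \<in> E" for e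
  proof -
    have "(\<Sum>x\<in>e. alpha_t (ls w (fst x)) (snd x)) = (\<Sum>x\<in>e. pi / 3)"
      using E_subset_edges[OF that] angle by (intro sum.cong) (auto simp: edges_def)
    also have "\<dots> = 2 * pi"
      using V that by (simp add: valence_def)
    finally show ?thesis .
  qed
  then show "zero_curv Tet glue gmap w"
    unfolding zero_curv_def curv_def by simp
qed

lemma curv_pairing_valence_6:
  assumes V: "\<forall>e\<in>E. valence e = 6"
  shows "(\<Sum>e\<in>E. K l e * g e) =
    (\<Sum>\<sigma>\<in>Tet. \<Sum>j\<in>{1,2,3}. (pi / 3 - alpha_t (ls l \<sigma>) {0, j}) * opp_sum (ls g \<sigma>) j)"
proof -
  have "2 * pi * (\<Sum>e\<in>E. g e) = (\<Sum>e\<in>E. \<Sum>x\<in>e. pi / 3 * ls g (fst x) (snd x))"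
    using V by (simp add: sum_distrib_left valence_def lsig_mem mult.assoc)
  also have "\<dots> = (\<Sum>\<sigma>\<in>Tet. \<Sum>A\<in>tet_edges. pi / 3 * ls g \<sigma> A)"
    by (simp add: sum_edge_classes)
  finally have two_pi: "2 * pi * (\<Sum>e\<in>E. g e) = (\<Sum>\<sigma>\<in>Tet. \<Sum>A\<in>tet_edges. pi / 3 * ls g \<sigma> A)" .
  have "(\<Sum>e\<in>E. K l e * g e) = (\<Sum>\<sigma>\<in>Tet. \<Sum>A\<in>tet_edges. (pi / 3 - alpha_t (ls l \<sigma>) A) * ls g \<sigma> A)"
    unfolding curv_pairing two_pi by (simp add: sum_subtractf[symmetric] left_diff_distrib)
  also have "\<dots> = (\<Sum>\<sigma>\<in>Tet. \<Sum>j\<in>{1,2,3}. (pi / 3 - alpha_t (ls l \<sigma>) {0, j}) * opp_sum (ls g \<sigma>) j)"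
    by (simp add: sum_tet_edges_alpha_t alpha_t_eq_tri_angle add.assoc)
  finally show ?thesis .
qed

lemma curv_orthogonal_equilateral:
  assumes V: "\<forall>e\<in>E. valence e = 6" and w: "w \<in> equilateral"
  shows "(\<Sum>e\<in>E. K l e * w e) = 0"
  unfolding curv_pairing_valence_6[OF V]
proof (rule sum.neutral, rule ballI)
  fix \<sigma> assume "\<sigma> \<in> Tet"
  define s where "s j = opp_sum (ls l \<sigma>) j" for j
  define c where "c = opp_sum (ls w \<sigma>) 1"
  have "opp_sum (ls w \<sigma>) 2 = c" "opp_sum (ls w \<sigma>) 3 = c"
    using w \<open>\<sigma> \<in> Tet\<close> unfolding equilateral_def c_def by auto
  then have "(\<Sum>j\<in>{1,2,3}. (pi / 3 - alpha_t (ls l \<sigma>) {0, j}) * opp_sum (ls w \<sigma>) j)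
      = c * (pi - (tri_angle (s 1) (s 2) (s 3) + tri_angle (s 2) (s 1) (s 3) + tri_angle (s 3) (s 1) (s 2)))"
    unfolding s_def c_def by (simp add: alpha_t_eq_tri_angle algebra_simps)
  then show "(\<Sum>j\<in>{1,2,3}. (pi / 3 - alpha_t (ls l \<sigma>) {0, j}) * opp_sum (ls w \<sigma>) j) = 0"
    by (simp add: tri_angle_sum)
qed

lemma curv_pairing_equilateral_offset:
  assumes V: "\<forall>e\<in>E. valence e = 6" and w: "w \<in> equilateral"
  shows "(\<Sum>e\<in>E. K l e * (l e - w e)) = - dissipation l / 3"
proof -
  have "(\<Sum>j\<in>{1,2,3}. (pi / 3 - alpha_t (ls l \<sigma>) {0, j}) * opp_sum (ls (\<lambda>e. l e - w e) \<sigma>) j)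
      = - angle_dissipation (opp_sum (ls l \<sigma>) 1) (opp_sum (ls l \<sigma>) 2) (opp_sum (ls l \<sigma>) 3) / 3"
    if "\<sigma> \<in> Tet" for \<sigma>
  proof -
    define s where "s j = opp_sum (ls l \<sigma>) j" for j
    define c where "c = opp_sum (ls w \<sigma>) 1"
    have "opp_sum (ls w \<sigma>) 2 = c" "opp_sum (ls w \<sigma>) 3 = c"
      using w that unfolding equilateral_def c_def by auto
    then have "(\<Sum>j\<in>{1,2,3}. (pi / 3 - alpha_t (ls l \<sigma>) {0, j}) * opp_sum (ls (\<lambda>e. l e - w e) \<sigma>) j)
        = (pi/3 - tri_angle (s 1) (s 2) (s 3)) * (s 1 - c) + (pi/3 - tri_angle (s 2) (s 1) (s 3)) * (s 2 - c)
          + (pi/3 - tri_angle (s 3) (s 1) (s 2)) * (s 3 - c)"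
      unfolding s_def c_def by (simp add: alpha_t_eq_tri_angle opp_sum_lsig_linear add.assoc)
    then show ?thesis
      unfolding s_def by (simp add: angle_defect_pairing)
  qed
  then show ?thesis
    unfolding curv_pairing_valence_6[OF V] dissipation_def by (simp add: sum_divide_distrib sum_negf)
qed

lemma shape_spread_offset:
  assumes "w \<in> equilateral"
  shows "shape_spread (\<lambda>e. u e - w e) = shape_spread u"
  unfolding shape_spread_def
proof (rule sum.cong[OF refl])
  fix \<sigma> assume "\<sigma> \<in> Tet"
  then have "opp_sum (ls w \<sigma>) 2 = opp_sum (ls w \<sigma>) 1" "opp_sum (ls w \<sigma>) 3 = opp_sum (ls w \<sigma>) 1"
    using assms unfolding equilateral_def by auto
  then show "spread (opp_sum (ls (\<lambda>e. u e - w e) \<sigma>) 1) (opp_sum (ls (\<lambda>e. u e - w e) \<sigma>) 2)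
      (opp_sum (ls (\<lambda>e. u e - w e) \<sigma>) 3) = spread (opp_sum (ls u \<sigma>) 1) (opp_sum (ls u \<sigma>) 2) (opp_sum (ls u \<sigma>) 3)"
    by (simp add: opp_sum_lsig_linear spread_def algebra_simps)
qed

lemma opp_sum_lsig_tendsto:
  assumes "\<forall>e\<in>E. (\<lambda>n. f n e) \<longlonglongrightarrow> g e" "\<sigma> \<in> Tet" "j \<in> {1,2,3}"
  shows "(\<lambda>n. opp_sum (ls (f n) \<sigma>) j) \<longlonglongrightarrow> opp_sum (ls g \<sigma>) j"
  unfolding opp_sum_def lsig_def
  using assms edge_class_in_E opp_edges_in_tet_edges by (intro tendsto_add) auto

lemma opp_sum_lsig_bound:
  assumes "\<sigma> \<in> Tet" "j \<in> {1,2,3}"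
  shows "\<bar>opp_sum (ls u \<sigma>) j\<bar> \<le> 2 * enorm E u"
proof -
  have bound: "\<bar>ls u \<sigma> A\<bar> \<le> enorm E u" if "A \<in> tet_edges" for A
    unfolding lsig_def enorm_def
    by (rule abs_le_sqrt_sum_squares[OF finite_E edge_class_in_E[OF assms(1) that]])
  from opp_edges_in_tet_edges[OF assms(2)] show ?thesis
    unfolding opp_sum_def using bound[of "{0, j}"] bound[of "V4 - {0, j}"]
      abs_triangle_ineq[of "ls u \<sigma> {0, j}" "ls u \<sigma> (V4 - {0, j})"] by linarith
qed

lemma shape_spread_nonneg: "0 \<le> shape_spread u"
  unfolding shape_spread_def spread_def by (intro sum_nonneg) simp

lemma dissipation_nonneg: "0 \<le> dissipation l"
  unfolding dissipation_def by (intro sum_nonneg angle_dissipation_nonneg)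

lemma dissipation_ge_shape_spread:
  assumes w: "w \<in> equilateral"
  shows "exp (- 2 * enorm E (\<lambda>e. l e - w e)) / 6 * shape_spread l \<le> dissipation l"
proof -
  define M where "M = 4 * enorm E (\<lambda>e. l e - w e)"
  have "exp (- M/2) / 6 * spread (opp_sum (ls l \<sigma>) 1) (opp_sum (ls l \<sigma>) 2) (opp_sum (ls l \<sigma>) 3)
      \<le> angle_dissipation (opp_sum (ls l \<sigma>) 1) (opp_sum (ls l \<sigma>) 2) (opp_sum (ls l \<sigma>) 3)"
    if "\<sigma> \<in> Tet" for \<sigma>
  proof (rule angle_dissipation_ge_spread)
    have "opp_sum (ls w \<sigma>) 2 = opp_sum (ls w \<sigma>) 1" "opp_sum (ls w \<sigma>) 3 = opp_sum (ls w \<sigma>) 1"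
      using w that unfolding equilateral_def by auto
    then have diff: "opp_sum (ls l \<sigma>) i - opp_sum (ls l \<sigma>) j
        = opp_sum (ls (\<lambda>e. l e - w e) \<sigma>) i - opp_sum (ls (\<lambda>e. l e - w e) \<sigma>) j"
      if "i \<in> {1,2,3}" "j \<in> {1,2,3}" for i j
      using that by (auto simp: opp_sum_lsig_linear)
    have bound: "\<bar>opp_sum (ls (\<lambda>e. l e - w e) \<sigma>) j\<bar> \<le> M / 2" if "j \<in> {1,2,3}" for j
      using opp_sum_lsig_bound[OF \<open>\<sigma> \<in> Tet\<close> that] unfolding M_def by simp
    have "\<bar>opp_sum (ls l \<sigma>) i - opp_sum (ls l \<sigma>) j\<bar> \<le> M" if "i \<in> {1,2,3}" "j \<in> {1,2,3}" for i j
      unfolding diff[OF that] using bound[OF that(1)] bound[OF that(2)]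
        abs_triangle_ineq4[of "opp_sum (ls (\<lambda>e. l e - w e) \<sigma>) i" "opp_sum (ls (\<lambda>e. l e - w e) \<sigma>) j"]
      by linarith
    then show "\<bar>opp_sum (ls l \<sigma>) 1 - opp_sum (ls l \<sigma>) 2\<bar> \<le> M" "\<bar>opp_sum (ls l \<sigma>) 1 - opp_sum (ls l \<sigma>) 3\<bar> \<le> M"
      "\<bar>opp_sum (ls l \<sigma>) 2 - opp_sum (ls l \<sigma>) 3\<bar> \<le> M"
      by simp_all
  qed
  then have "exp (- M/2) / 6 * shape_spread l \<le> dissipation l"
    unfolding shape_spread_def dissipation_def sum_distrib_left by (rule sum_mono)
  then show ?thesis
    unfolding M_def by simp
qed

lemma shape_spread_coercive:
  "\<exists>\<kappa>>0. \<forall>u. (\<forall>w\<in>equilateral. (\<Sum>e\<in>E. u e * w e) = 0) \<longrightarrow> \<kappa> * (\<Sum>e\<in>E. (u e)\<^sup>2) \<le> shape_spread u"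
proof (rule quadratic_form_coercive[OF finite_E])
  show "0 \<le> shape_spread u" for u
    by (rule shape_spread_nonneg)
  show "shape_spread (\<lambda>e. c * u e) = c\<^sup>2 * shape_spread u" for c u
    unfolding shape_spread_def spread_def opp_sum_lsig_linear
    by (simp add: sum_distrib_left power_mult_distrib flip: right_diff_distrib distrib_left)
  show "(\<lambda>n. shape_spread (f n)) \<longlonglongrightarrow> shape_spread g" if "\<forall>e\<in>E. (\<lambda>n. f n e) \<longlonglongrightarrow> g e" for f g
    unfolding shape_spread_def spread_def
    by (intro tendsto_sum tendsto_intros opp_sum_lsig_tendsto[OF that]) auto
  show "u \<in> equilateral" if "shape_spread u = 0" for u
  proof -
    have "\<forall>\<sigma>\<in>Tet. spread (opp_sum (ls u \<sigma>) 1) (opp_sum (ls u \<sigma>) 2) (opp_sum (ls u \<sigma>) 3) = 0"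
      using that unfolding shape_spread_def spread_def by (subst (asm) sum_nonneg_eq_0_iff[OF finite_Tet]) auto
    then show ?thesis
      unfolding equilateral_def spread_def by (auto simp: add_nonneg_eq_0_iff)
  qed
qed

lemma exists_equilateral_projection:
  "\<exists>w0\<in>equilateral. \<forall>w\<in>equilateral. (\<Sum>e\<in>E. (l e - w0 e) * w e) = 0"
proof (rule exists_orthogonal_projection[OF finite_E zero_in_equilateral])
  show "(\<lambda>e. w e + t * v e) \<in> equilateral" if "w \<in> equilateral" "v \<in> equilateral" for w v t
    using that unfolding equilateral_def by (simp add: opp_sum_lsig_linear)
  show "g \<in> equilateral" if f: "\<forall>n. f n \<in> equilateral" and g: "\<forall>e\<in>E. (\<lambda>n. f n e) \<longlonglongrightarrow> g e"
    for f g
    unfolding equilateral_def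
  proof (intro CollectI ballI conjI)
    fix \<sigma> assume "\<sigma> \<in> Tet"
    note lim = opp_sum_lsig_tendsto[OF g \<open>\<sigma> \<in> Tet\<close>]
    have "(\<lambda>n. opp_sum (ls (f n) \<sigma>) j) = (\<lambda>n. opp_sum (ls (f n) \<sigma>) 1)" if "j \<in> {2,3}" for j
      using f \<open>\<sigma> \<in> Tet\<close> that unfolding equilateral_def by auto
    then show "opp_sum (ls g \<sigma>) 2 = opp_sum (ls g \<sigma>) 1" "opp_sum (ls g \<sigma>) 3 = opp_sum (ls g \<sigma>) 1"
      using LIMSEQ_unique[OF lim[of 2]] lim[of 1] LIMSEQ_unique[OF lim[of 3]] by auto
  qed
qed

lemma dissipation_ge_dist:
  assumes w0: "w0 \<in> equilateral" and perp: "\<forall>w\<in>equilateral. (\<Sum>e\<in>E. (l e - w0 e) * w e) = 0"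
    and R: "enorm E (\<lambda>e. l e - w0 e) \<le> R" and "0 \<le> \<kappa>"
    and coercive: "\<And>u. \<forall>w\<in>equilateral. (\<Sum>e\<in>E. u e * w e) = 0 \<Longrightarrow> \<kappa> * (\<Sum>e\<in>E. (u e)\<^sup>2) \<le> shape_spread u"
  shows "exp (- 2 * R) * \<kappa> / 6 * (\<Sum>e\<in>E. (l e - w0 e)\<^sup>2) \<le> dissipation l"
proof -
  have "\<kappa> * (\<Sum>e\<in>E. (l e - w0 e)\<^sup>2) \<le> shape_spread l"
    using coercive[OF perp] shape_spread_offset[OF w0] by simp
  then have "exp (- 2 * R) / 6 * (\<kappa> * (\<Sum>e\<in>E. (l e - w0 e)\<^sup>2))
      \<le> exp (- 2 * enorm E (\<lambda>e. l e - w0 e)) / 6 * shape_spread l"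
    using R \<open>0 \<le> \<kappa>\<close> shape_spread_nonneg by (intro mult_mono) (auto intro!: mult_nonneg_nonneg sum_nonneg)
  also have "\<dots> \<le> dissipation l"
    by (rule dissipation_ge_shape_spread[OF w0])
  finally show ?thesis
    by (simp add: algebra_simps)
qed

lemma ricci_flow_orthogonal_invariant:
  assumes V: "\<forall>e\<in>E. valence e = 6" and flow: "ricci_flow_sol Tet glue gmap l"
    and w: "w \<in> equilateral" and "0 \<le> t"
  shows "(\<Sum>e\<in>E. l t e * w e) = (\<Sum>e\<in>E. l 0 e * w e)"
proof (rule const_if_deriv_zero[where g = "\<lambda>s. \<Sum>e\<in>E. l s e * w e", OF _ \<open>0 \<le> t\<close>])
  fix s :: real assume "0 \<le> s"
  then have "((\<lambda>s. \<Sum>e\<in>E. l s e * w e) has_real_derivative (\<Sum>e\<in>E. K (l s) e * w e)) (at s within {0..})"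
    using flow unfolding ricci_flow_sol_def by (intro DERIV_sum DERIV_cmult_right) auto
  then show "((\<lambda>s. \<Sum>e\<in>E. l s e * w e) has_real_derivative 0) (at s within {0..})"
    using curv_orthogonal_equilateral[OF V w] by simp
qed

lemma ricci_flow_dist_deriv:
  assumes V: "\<forall>e\<in>E. valence e = 6" and flow: "ricci_flow_sol Tet glue gmap l"
    and w: "w \<in> equilateral" and "0 \<le> s"
  shows "((\<lambda>s. \<Sum>e\<in>E. (l s e - w e)\<^sup>2) has_real_derivative - 2 / 3 * dissipation (l s)) (at s within {0..})"
proof -
  have "((\<lambda>s. \<Sum>e\<in>E. (l s e - w e)\<^sup>2) has_real_derivative (\<Sum>e\<in>E. 2 * (l s e - w e) * K (l s) e))
      (at s within {0..})"
    using flow \<open>0 \<le> s\<close> unfolding ricci_flow_sol_def by (auto intro!: DERIV_sum derivative_eq_intros)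
  moreover have "(\<Sum>e\<in>E. 2 * (l s e - w e) * K (l s) e) = 2 * (\<Sum>e\<in>E. K (l s) e * (l s e - w e))"
    by (simp add: sum_distrib_left algebra_simps)
  ultimately show ?thesis
    unfolding curv_pairing_equilateral_offset[OF V w] by simp
qed

lemma ricci_flow_dist_decay:
  assumes V: "\<forall>e\<in>E. valence e = 6" and flow: "ricci_flow_sol Tet glue gmap l"
    and w0: "w0 \<in> equilateral" and perp0: "\<forall>w\<in>equilateral. (\<Sum>e\<in>E. (l 0 e - w0 e) * w e) = 0"
  shows "\<exists>\<gamma>>0. \<forall>t\<ge>0. (\<Sum>e\<in>E. (l t e - w0 e)\<^sup>2) \<le> (\<Sum>e\<in>E. (l 0 e - w0 e)\<^sup>2) * exp (- \<gamma> * t)"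
proof -
  obtain \<kappa> where "\<kappa> > 0"
    and coercive: "\<And>u. \<forall>w\<in>equilateral. (\<Sum>e\<in>E. u e * w e) = 0 \<Longrightarrow> \<kappa> * (\<Sum>e\<in>E. (u e)\<^sup>2) \<le> shape_spread u"
    using shape_spread_coercive by blast
  define D where "D s = - 2 / 3 * dissipation (l s)" for s
  define V where "V = (\<lambda>s. \<Sum>e\<in>E. (l s e - w0 e)\<^sup>2)"
  define \<gamma> where "\<gamma> = exp (- 2 * sqrt (V 0)) * \<kappa> / 9"
  have deriv: "(V has_real_derivative D s) (at s within {0..})" if "0 \<le> s" for s
    unfolding V_def D_def by (rule ricci_flow_dist_deriv[OF V flow w0 that])
  have V_le: "V t \<le> V 0" if "0 \<le> t" for t
    by (rule antimono_if_deriv_nonpos[OF deriv]) (use that dissipation_nonneg in \<open>auto simp: D_def\<close>)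
  have perp: "\<forall>w\<in>equilateral. (\<Sum>e\<in>E. (l t e - w0 e) * w e) = 0" if "0 \<le> t" for t
    using perp0 ricci_flow_orthogonal_invariant[OF V flow _ that]
    by (simp add: left_diff_distrib sum_subtractf)
  have "D t \<le> - \<gamma> * V t" if "0 < t" for t
  proof -
    have "enorm E (\<lambda>e. l t e - w0 e) \<le> sqrt (V 0)"
      using V_le[of t] that unfolding enorm_def V_def by simp
    from dissipation_ge_dist[OF w0 perp this _ coercive]
    have "exp (- 2 * sqrt (V 0)) * \<kappa> / 6 * V t \<le> dissipation (l t)"
      using \<open>\<kappa> > 0\<close> that unfolding V_def by simp
    then show ?thesis
      unfolding D_def \<gamma>_def by linarith
  qed
  then have "V t \<le> V 0 * exp (- \<gamma> * t)" if "0 \<le> t" for t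
    using exp_decay_if_deriv_le[of V D \<gamma> t] deriv that by blast
  moreover have "\<gamma> > 0"
    unfolding \<gamma>_def using \<open>\<kappa> > 0\<close> by simp
  ultimately show ?thesis
    unfolding V_def by blast
qed

lemma ricci_flow_converges:
  assumes V: "\<forall>e\<in>E. valence e = 6" and flow: "ricci_flow_sol Tet glue gmap l"
  shows "\<exists>w0\<in>equilateral. \<exists>C c. c > 0 \<and> (\<forall>t\<ge>0. enorm E (\<lambda>e. l t e - w0 e) \<le> C * exp (- c * t))"
proof -
  obtain w0 where w0: "w0 \<in> equilateral" and perp0: "\<forall>w\<in>equilateral. (\<Sum>e\<in>E. (l 0 e - w0 e) * w e) = 0"
    using exists_equilateral_projection by blast
  obtain \<gamma> where "\<gamma> > 0"
    and decay: "\<And>t. 0 \<le> t \<Longrightarrow> (\<Sum>e\<in>E. (l t e - w0 e)\<^sup>2) \<le> (\<Sum>e\<in>E. (l 0 e - w0 e)\<^sup>2) * exp (- \<gamma> * t)"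
    using ricci_flow_dist_decay[OF V flow w0 perp0] by blast
  have "enorm E (\<lambda>e. l t e - w0 e) \<le> enorm E (\<lambda>e. l 0 e - w0 e) * exp (- (\<gamma> / 2) * t)" if "0 \<le> t" for t
    unfolding enorm_def by (rule sqrt_le_sqrt_mult_exp_half[OF decay[OF that]])
  then show ?thesis
    using w0 \<open>\<gamma> > 0\<close> by (intro bexI[OF _ w0] exI[of _ "enorm E (\<lambda>e. l 0 e - w0 e)"] exI[of _ "\<gamma> / 2"]) auto
qed

end

theorem mainTheorem4:
  fixes Tet :: "'a set"
    and glue :: "'a \<times> nat \<Rightarrow> 'a \<times> nat"
    and gmap :: "'a \<times> nat \<Rightarrow> nat \<Rightarrow> nat"
    and d :: nat
  assumes "pseudo3 Tet glue gmap"
    and "edge_transitive Tet glue gmap"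
    and "\<forall>e\<in>edge_classes Tet glue gmap. valence e = d"
  shows "(d \<noteq> 6 \<longrightarrow>
            \<not> (\<exists>l. zero_curv Tet glue gmap l) \<and>
            (\<forall>l. ricci_flow_sol Tet glue gmap l \<longrightarrow>
               (\<exists>tn :: nat \<Rightarrow> real. filterlim tn at_top sequentially \<and>
                  filterlim (\<lambda>n. enorm (edge_classes Tet glue gmap) (l (tn n))) at_top sequentially)))
       \<and> (d = 6 \<longrightarrow>
            (\<exists>l. decorated Tet glue gmap l \<and> zero_curv Tet glue gmap l) \<and>
            (\<forall>l. ricci_flow_sol Tet glue gmap l \<longrightarrow>
               (\<exists>ls. decorated Tet glue gmap ls \<and> zero_curv Tet glue gmap ls \<and>
                  (\<exists>C c. c > 0 \<and> (\<forall>t\<ge>0.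
                     enorm (edge_classes Tet glue gmap) (\<lambda>e. l t e - ls e) \<le> C * exp (- c * t))))))"
proof -
  \<comment> \<open>Edge-transitivity enters only through the equal valences of assumption 3.\<close>
  interpret closed_pseudo_3_manifold Tet glue gmap
    by unfold_locales (rule assms(1))
  show ?thesis
  proof (intro conjI impI allI)
    assume "d \<noteq> 6"
    then show "\<not> (\<exists>l. zero_curv Tet glue gmap l)"
      using no_zero_curv_if_valence_ne_6 assms(3) by blast
  next
    fix l assume "d \<noteq> 6" "ricci_flow_sol Tet glue gmap l"
    then show "\<exists>tn :: nat \<Rightarrow> real. filterlim tn at_top sequentially \<and>
        filterlim (\<lambda>n. enorm (edge_classes Tet glue gmap) (l (tn n))) at_top sequentially"
      using ricci_flow_diverges assms(3) filterlim_real_sequentially by blast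
  next
    assume "d = 6"
    then show "\<exists>l. decorated Tet glue gmap l \<and> zero_curv Tet glue gmap l"
      using equilateral_decorated_zero_curv zero_in_equilateral assms(3) by blast
  next
    fix l assume "d = 6" "ricci_flow_sol Tet glue gmap l"
    then show "\<exists>ls. decorated Tet glue gmap ls \<and> zero_curv Tet glue gmap ls \<and>
        (\<exists>C c. c > 0 \<and> (\<forall>t\<ge>0. enorm (edge_classes Tet glue gmap) (\<lambda>e. l t e - ls e) \<le> C * exp (- c * t)))"
      using ricci_flow_converges equilateral_decorated_zero_curv assms(3) by meson
  qed
qed

end
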